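(* Let $\tau=(G,H,\eta,T)$ be folding data for a symmetric monoidal category $\mathcal{C}$ with strict $G$-action $\phi$ by strict monoidal autofunctors. Then for each $g\in G$ and each object $A$ of $\hat{\mathcal{C}}_{H,\eta}$ there is an isomorphism $\alpha_A^g:\phi_g(\mathrm{Fold}_\tau A)\to\mathrm{Fold}_\tau A$ in $\mathcal{C}$, namely $\alpha_A^g=\rho_A^g\circ\sigma_A^g$ where $\sigma_A^g$ is a composite of symmetry isomorphisms reordering tensor factors and $\rho_A^g=\bigotimes_{t\in T}\phi_t((\eta_A^{h_t})^{-1})$ for suitable $h_t\in H$, such that for every morphism $f:A\to B$ of $\hat{\mathcal{C}}_{H,\eta}$, $$\alpha_B^g\circ\phi_g(\mathrm{Fold}_\tau f)\circ(\alpha_A^g)^{-1}=\mathrm{Fold}_\tau f.$$ In other words, each $\phi_g$, applied to the folded category $\mathrm{FLD}_\tau(\mathcal{C})$, is naturally isomorphic to the identity on $\mathrm{FLD}_\tau(\mathcal{C})$.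
   Context: Setup: $\mathcal{C}$ is a symmetric monoidal category, $G$ a finite group, $\phi:G\to\mathrm{Aut}(\mathcal{C})$ a strict left action ($\phi_g\phi_h=\phi_{gh}$, $\phi_e=\mathrm{id}$) by strict monoidal autofunctors. For $H\le G$, $\eta=(\eta_A^h)$ is a family of isomorphisms $\eta_A^h:A\to\phi_hA$ ($A\in\mathrm{ob}\,\mathcal{C}$, $h\in H$) with $\phi_h(\eta_A^{h'})\circ\eta_A^h=\eta_A^{hh'}$ and $\eta^h_{A\otimes B}=\eta^h_A\otimes\eta^h_B$. $\hat{\mathcal{C}}_{H,\eta}$ is the category with objects the pairs $(A,(\eta_A^h)_{h\in H})$ and morphisms those $f:A\to B$ of $\mathcal{C}$ with $\phi_h(f)\circ\eta_A^h=\eta_B^h\circ f$ for all $h\in H$. Folding data is $\tau=(G,H,\eta,T)$ with $T$ a left transversal of $H$ in $G$ (one representative of each left coset $tH$), with a fixed ordering. The folding functor $\mathrm{Fold}_\tau:\hat{\mathcal{C}}_{H,\eta}\to\mathcal{C}$ sends $A\mapsto\bigotimes_{t\in T}\phi_tA$ and $f\mapsto\bigotimes_{t\in T}\phi_tf$. The folded category $\mathrm{FLD}_\tau(\mathcal{C})$ is the image subcategory of $\mathcal{C}$. For $g\in G$, $gT$ is another left transversal, and $h_t\in H$ is defined by: the representative of the coset $tH$ in $gT$ is $th_t$. *)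

theory Defs
  imports "HOL-Algebra.Coset"
begin

text \<open>A category with a tensor product. Composition convention: cp C g f = g o f.\<close>

record ('o, 'm) smcat =
  ob  :: "'o set"
  ar  :: "'m set"
  dm  :: "'m \<Rightarrow> 'o"
  cd  :: "'m \<Rightarrow> 'o"
  cp  :: "'m \<Rightarrow> 'm \<Rightarrow> 'm"
  idm :: "'o \<Rightarrow> 'm"
  tob :: "'o \<Rightarrow> 'o \<Rightarrow> 'o"
  tar :: "'m \<Rightarrow> 'm \<Rightarrow> 'm"
  unt :: "'o"
  asc :: "'o \<Rightarrow> 'o \<Rightarrow> 'o \<Rightarrow> 'm"
  lu  :: "'o \<Rightarrow> 'm"
  ru  :: "'o \<Rightarrow> 'm"
  sy  :: "'o \<Rightarrow> 'o \<Rightarrow> 'm"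

definition hom :: "('o, 'm, 'x) smcat_scheme \<Rightarrow> 'o \<Rightarrow> 'o \<Rightarrow> 'm set" where
  "hom C A B = {f \<in> ar C. dm C f = A \<and> cd C f = B}"

definition is_inv :: "('o, 'm, 'x) smcat_scheme \<Rightarrow> 'm \<Rightarrow> 'm \<Rightarrow> bool" where
  "is_inv C f g \<longleftrightarrow> f \<in> ar C \<and> g \<in> ar C \<and> dm C g = cd C f \<and> cd C g = dm C f
     \<and> cp C g f = idm C (dm C f) \<and> cp C f g = idm C (cd C f)"

definition iso_arr :: "('o, 'm, 'x) smcat_scheme \<Rightarrow> 'm \<Rightarrow> bool" where
  "iso_arr C f \<longleftrightarrow> (\<exists>g. is_inv C f g)"

definition inv_arr :: "('o, 'm, 'x) smcat_scheme \<Rightarrow> 'm \<Rightarrow> 'm" where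
  "inv_arr C f = (THE g. is_inv C f g)"

definition category :: "('o, 'm, 'x) smcat_scheme \<Rightarrow> bool" where
  "category C \<longleftrightarrow>
     (\<forall>f \<in> ar C. dm C f \<in> ob C \<and> cd C f \<in> ob C)
   \<and> (\<forall>A \<in> ob C. idm C A \<in> hom C A A)
   \<and> (\<forall>f \<in> ar C. \<forall>g \<in> ar C. cd C f = dm C g \<longrightarrow>
        cp C g f \<in> hom C (dm C f) (cd C g))
   \<and> (\<forall>f \<in> ar C. cp C f (idm C (dm C f)) = f \<and> cp C (idm C (cd C f)) f = f)
   \<and> (\<forall>f \<in> ar C. \<forall>g \<in> ar C. \<forall>h \<in> ar C. cd C f = dm C g \<longrightarrow> cd C g = dm C h \<longrightarrow>
        cp C h (cp C g f) = cp C (cp C h g) f)"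

definition monoidal_cat :: "('o, 'm, 'x) smcat_scheme \<Rightarrow> bool" where
  "monoidal_cat C \<longleftrightarrow> category C
   \<and> unt C \<in> ob C
   \<and> (\<forall>A \<in> ob C. \<forall>B \<in> ob C. tob C A B \<in> ob C)
   \<and> (\<forall>f \<in> ar C. \<forall>g \<in> ar C.
        tar C f g \<in> hom C (tob C (dm C f) (dm C g)) (tob C (cd C f) (cd C g)))
   \<and> (\<forall>A \<in> ob C. \<forall>B \<in> ob C. tar C (idm C A) (idm C B) = idm C (tob C A B))
   \<and> (\<forall>f \<in> ar C. \<forall>g \<in> ar C. \<forall>f' \<in> ar C. \<forall>g' \<in> ar C.
        cd C f = dm C g \<longrightarrow> cd C f' = dm C g' \<longrightarrow>
        tar C (cp C g f) (cp C g' f') = cp C (tar C g g') (tar C f f'))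
   \<comment> \<open>associator, unitors: isomorphisms\<close>
   \<and> (\<forall>A \<in> ob C. \<forall>B \<in> ob C. \<forall>D \<in> ob C.
        asc C A B D \<in> hom C (tob C (tob C A B) D) (tob C A (tob C B D)) \<and> iso_arr C (asc C A B D))
   \<and> (\<forall>A \<in> ob C. lu C A \<in> hom C (tob C (unt C) A) A \<and> iso_arr C (lu C A))
   \<and> (\<forall>A \<in> ob C. ru C A \<in> hom C (tob C A (unt C)) A \<and> iso_arr C (ru C A))
   \<comment> \<open>naturality\<close>
   \<and> (\<forall>f \<in> ar C. \<forall>g \<in> ar C. \<forall>h \<in> ar C.
        cp C (asc C (cd C f) (cd C g) (cd C h)) (tar C (tar C f g) h)
        = cp C (tar C f (tar C g h)) (asc C (dm C f) (dm C g) (dm C h)))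
   \<and> (\<forall>f \<in> ar C. cp C (lu C (cd C f)) (tar C (idm C (unt C)) f) = cp C f (lu C (dm C f)))
   \<and> (\<forall>f \<in> ar C. cp C (ru C (cd C f)) (tar C f (idm C (unt C))) = cp C f (ru C (dm C f)))
   \<comment> \<open>pentagon and triangle\<close>
   \<and> (\<forall>A \<in> ob C. \<forall>B \<in> ob C. \<forall>D \<in> ob C. \<forall>E \<in> ob C.
        cp C (tar C (idm C A) (asc C B D E))
          (cp C (asc C A (tob C B D) E) (tar C (asc C A B D) (idm C E)))
        = cp C (asc C A B (tob C D E)) (asc C (tob C A B) D E))
   \<and> (\<forall>A \<in> ob C. \<forall>B \<in> ob C.
        cp C (tar C (idm C A) (lu C B)) (asc C A (unt C) B) = tar C (ru C A) (idm C B))"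

definition sym_monoidal_cat :: "('o, 'm, 'x) smcat_scheme \<Rightarrow> bool" where
  "sym_monoidal_cat C \<longleftrightarrow> monoidal_cat C
   \<and> (\<forall>A \<in> ob C. \<forall>B \<in> ob C. sy C A B \<in> hom C (tob C A B) (tob C B A))
   \<and> (\<forall>f \<in> ar C. \<forall>g \<in> ar C.
        cp C (sy C (cd C f) (cd C g)) (tar C f g) = cp C (tar C g f) (sy C (dm C f) (dm C g)))
   \<and> (\<forall>A \<in> ob C. \<forall>B \<in> ob C. cp C (sy C B A) (sy C A B) = idm C (tob C A B))
   \<comment> \<open>hexagon\<close>
   \<and> (\<forall>A \<in> ob C. \<forall>B \<in> ob C. \<forall>D \<in> ob C.
        cp C (asc C B D A) (cp C (sy C A (tob C B D)) (asc C A B D))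
        = cp C (tar C (idm C B) (sy C A D)) (cp C (asc C B A D) (tar C (sy C A B) (idm C D))))"

definition functor_on :: "('o, 'm, 'x) smcat_scheme \<Rightarrow> ('o \<Rightarrow> 'o) \<Rightarrow> ('m \<Rightarrow> 'm) \<Rightarrow> bool" where
  "functor_on C FO FM \<longleftrightarrow>
     (\<forall>A \<in> ob C. FO A \<in> ob C)
   \<and> (\<forall>f \<in> ar C. FM f \<in> hom C (FO (dm C f)) (FO (cd C f)))
   \<and> (\<forall>A \<in> ob C. FM (idm C A) = idm C (FO A))
   \<and> (\<forall>f \<in> ar C. \<forall>g \<in> ar C. cd C f = dm C g \<longrightarrow> FM (cp C g f) = cp C (FM g) (FM f))"

definition strict_monoidal_autofunctor ::
  "('o, 'm, 'x) smcat_scheme \<Rightarrow> ('o \<Rightarrow> 'o) \<Rightarrow> ('m \<Rightarrow> 'm) \<Rightarrow> bool" where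
  "strict_monoidal_autofunctor C FO FM \<longleftrightarrow> functor_on C FO FM
   \<and> bij_betw FO (ob C) (ob C) \<and> bij_betw FM (ar C) (ar C)
   \<and> FO (unt C) = unt C
   \<and> (\<forall>A \<in> ob C. \<forall>B \<in> ob C. FO (tob C A B) = tob C (FO A) (FO B))
   \<and> (\<forall>f \<in> ar C. \<forall>g \<in> ar C. FM (tar C f g) = tar C (FM f) (FM g))
   \<and> (\<forall>A \<in> ob C. \<forall>B \<in> ob C. \<forall>D \<in> ob C. FM (asc C A B D) = asc C (FO A) (FO B) (FO D))
   \<and> (\<forall>A \<in> ob C. FM (lu C A) = lu C (FO A) \<and> FM (ru C A) = ru C (FO A))"

definition strict_action ::
  "('o, 'm, 'x) smcat_scheme \<Rightarrow> ('g, 'b) monoid_scheme \<Rightarrow>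
   ('g \<Rightarrow> 'o \<Rightarrow> 'o) \<Rightarrow> ('g \<Rightarrow> 'm \<Rightarrow> 'm) \<Rightarrow> bool" where
  "strict_action C G phiO phiM \<longleftrightarrow>
     (\<forall>g \<in> carrier G. strict_monoidal_autofunctor C (phiO g) (phiM g))
   \<and> (\<forall>g \<in> carrier G. \<forall>h \<in> carrier G. \<forall>A \<in> ob C. phiO g (phiO h A) = phiO (g \<otimes>\<^bsub>G\<^esub> h) A)
   \<and> (\<forall>g \<in> carrier G. \<forall>h \<in> carrier G. \<forall>f \<in> ar C. phiM g (phiM h f) = phiM (g \<otimes>\<^bsub>G\<^esub> h) f)
   \<and> (\<forall>A \<in> ob C. phiO \<one>\<^bsub>G\<^esub> A = A)
   \<and> (\<forall>f \<in> ar C. phiM \<one>\<^bsub>G\<^esub> f = f)"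

definition eta_data ::
  "('o, 'm, 'x) smcat_scheme \<Rightarrow> ('g, 'b) monoid_scheme \<Rightarrow> 'g set \<Rightarrow>
   ('g \<Rightarrow> 'o \<Rightarrow> 'o) \<Rightarrow> ('g \<Rightarrow> 'm \<Rightarrow> 'm) \<Rightarrow> ('g \<Rightarrow> 'o \<Rightarrow> 'm) \<Rightarrow> bool" where
  "eta_data C G H phiO phiM eta \<longleftrightarrow>
     (\<forall>h \<in> H. \<forall>A \<in> ob C. eta h A \<in> hom C A (phiO h A) \<and> iso_arr C (eta h A))
   \<and> (\<forall>h \<in> H. \<forall>h' \<in> H. \<forall>A \<in> ob C.
        cp C (phiM h (eta h' A)) (eta h A) = eta (h \<otimes>\<^bsub>G\<^esub> h') A)
   \<and> (\<forall>h \<in> H. \<forall>A \<in> ob C. \<forall>B \<in> ob C. eta h (tob C A B) = tar C (eta h A) (eta h B))"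

text \<open>Morphisms of C-hat from A to B (objects of C-hat are the objects of C
  equipped with the fixed family eta).\<close>
definition hat_hom ::
  "('o, 'm, 'x) smcat_scheme \<Rightarrow> 'g set \<Rightarrow> ('g \<Rightarrow> 'o \<Rightarrow> 'o) \<Rightarrow> ('g \<Rightarrow> 'm \<Rightarrow> 'm) \<Rightarrow>
   ('g \<Rightarrow> 'o \<Rightarrow> 'm) \<Rightarrow> 'o \<Rightarrow> 'o \<Rightarrow> 'm set" where
  "hat_hom C H phiO phiM eta A B =
     {f \<in> hom C A B. \<forall>h \<in> H. cp C (phiM h f) (eta h A) = cp C (eta h B) f}"

definition left_transversal :: "('g, 'b) monoid_scheme \<Rightarrow> 'g set \<Rightarrow> 'g list \<Rightarrow> bool" where
  "left_transversal G H ts \<longleftrightarrow> distinct ts \<and> set ts \<subseteq> carrier G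
     \<and> (\<forall>g \<in> carrier G. \<exists>!t. t \<in> set ts \<and> g \<in> t <#\<^bsub>G\<^esub> H)"

fun tens_obs :: "('o, 'm, 'x) smcat_scheme \<Rightarrow> 'o list \<Rightarrow> 'o" where
  "tens_obs C [] = unt C"
| "tens_obs C [A] = A"
| "tens_obs C (A # B # As) = tob C A (tens_obs C (B # As))"

fun tens_ars :: "('o, 'm, 'x) smcat_scheme \<Rightarrow> 'm list \<Rightarrow> 'm" where
  "tens_ars C [] = idm C (unt C)"
| "tens_ars C [f] = f"
| "tens_ars C (f # g # fs) = tar C f (tens_ars C (g # fs))"

definition fold_obj :: "('o, 'm, 'x) smcat_scheme \<Rightarrow> ('g \<Rightarrow> 'o \<Rightarrow> 'o) \<Rightarrow> 'g list \<Rightarrow> 'o \<Rightarrow> 'o" where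
  "fold_obj C phiO ts A = tens_obs C (map (\<lambda>t. phiO t A) ts)"

definition fold_arr :: "('o, 'm, 'x) smcat_scheme \<Rightarrow> ('g \<Rightarrow> 'm \<Rightarrow> 'm) \<Rightarrow> 'g list \<Rightarrow> 'm \<Rightarrow> 'm" where
  "fold_arr C phiM ts f = tens_ars C (map (\<lambda>t. phiM t f) ts)"

text \<open>Arrows built from symmetries (and the associators/unitors needed to
  rebracket) by tensoring and composing: "composites of symmetry isomorphisms
  reordering tensor factors".\<close>
inductive_set struct_arrs :: "('o, 'm, 'x) smcat_scheme \<Rightarrow> 'm set" for C where
  s_id:   "A \<in> ob C \<Longrightarrow> idm C A \<in> struct_arrs C"
| s_sym:  "A \<in> ob C \<Longrightarrow> B \<in> ob C \<Longrightarrow> sy C A B \<in> struct_arrs C"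
| s_asc:  "A \<in> ob C \<Longrightarrow> B \<in> ob C \<Longrightarrow> D \<in> ob C \<Longrightarrow> asc C A B D \<in> struct_arrs C"
| s_asci: "A \<in> ob C \<Longrightarrow> B \<in> ob C \<Longrightarrow> D \<in> ob C \<Longrightarrow> inv_arr C (asc C A B D) \<in> struct_arrs C"
| s_lu:   "A \<in> ob C \<Longrightarrow> lu C A \<in> struct_arrs C"
| s_lui:  "A \<in> ob C \<Longrightarrow> inv_arr C (lu C A) \<in> struct_arrs C"
| s_ru:   "A \<in> ob C \<Longrightarrow> ru C A \<in> struct_arrs C"
| s_rui:  "A \<in> ob C \<Longrightarrow> inv_arr C (ru C A) \<in> struct_arrs C"
| s_tens: "f \<in> struct_arrs C \<Longrightarrow> g \<in> struct_arrs C \<Longrightarrow> tar C f g \<in> struct_arrs C"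
| s_comp: "f \<in> struct_arrs C \<Longrightarrow> g \<in> struct_arrs C \<Longrightarrow> cd C f = dm C g \<Longrightarrow>
           cp C g f \<in> struct_arrs C"

end

theory Submission
  imports Defs "HOL-Algebra.Left_Coset"
begin

text \<open>Every \<open>g t\<close> (\<open>t \<in> T\<close>) lies in the coset of a unique element of \<open>T\<close>, so
  \<open>g t = \<psi>(t) h(\<psi>(t))\<close> with \<open>\<psi>\<close> a permutation of \<open>T\<close> and \<open>h\<close> taking values in \<open>H\<close>.
  Hence \<open>\<phi>\<^sub>g (Fold A)\<close> is the tensor product of the objects \<open>\<phi>\<^bsub>t h(t)\<^esub> A\<close> taken in the
  order \<open>\<psi>(T)\<close>. A composite of symmetries, built by moving one factor at a time to the front,
  restores the order \<open>T\<close> naturally in the factors, and the maps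
  \<open>\<phi>\<^sub>t (\<eta>\<^bsup>h(t)\<^esup>)\<^sup>-\<^sup>1 : \<phi>\<^sub>t \<phi>\<^bsub>h(t)\<^esub> A \<rightarrow> \<phi>\<^sub>t A\<close> remove the twists. Naturality in \<open>f\<close> holds
  because the morphisms in \<open>hat_hom\<close> commute with \<open>\<eta>\<close>.\<close>

section \<open>Symmetric monoidal categories\<close>

locale sym_monoidal =
  fixes C :: "('o, 'm, 'x) smcat_scheme"
  assumes sym_monoidal_cat: "sym_monoidal_cat C"
begin

lemma category: "category C"
  and monoidal_cat: "monoidal_cat C"
  using sym_monoidal_cat by (simp_all add: sym_monoidal_cat_def monoidal_cat_def)

lemma hom_ar: "f \<in> hom C A B \<Longrightarrow> f \<in> ar C"
  and hom_dom: "f \<in> hom C A B \<Longrightarrow> dm C f = A"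
  and hom_cod: "f \<in> hom C A B \<Longrightarrow> cd C f = B"
  and ar_in_hom: "f \<in> ar C \<Longrightarrow> f \<in> hom C (dm C f) (cd C f)"
  by (simp_all add: hom_def)

lemma hom_ob: "f \<in> hom C A B \<Longrightarrow> A \<in> ob C \<and> B \<in> ob C"
  using category unfolding category_def hom_def by auto

lemma id_in_hom: "A \<in> ob C \<Longrightarrow> idm C A \<in> hom C A A"
  using category unfolding category_def by auto

lemma comp_in_hom: "f \<in> hom C A B \<Longrightarrow> g \<in> hom C B D \<Longrightarrow> cp C g f \<in> hom C A D"
  using category unfolding category_def hom_def by auto

lemma comp_id_left: "f \<in> hom C A B \<Longrightarrow> cp C (idm C B) f = f"
  and comp_id_right: "f \<in> hom C A B \<Longrightarrow> cp C f (idm C A) = f"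
  using category unfolding category_def hom_def by auto

lemma comp_assoc: "f \<in> hom C A B \<Longrightarrow> g \<in> hom C B D \<Longrightarrow> h \<in> hom C D E \<Longrightarrow>
    cp C h (cp C g f) = cp C (cp C h g) f"
  using category unfolding category_def hom_def by auto

lemma paste_squares:
  assumes a: "a \<in> hom C P Q" and a': "a' \<in> hom C Q R"
    and u: "u \<in> hom C P P'" and v: "v \<in> hom C Q Q'" and w: "w \<in> hom C R R'"
    and b: "b \<in> hom C P' Q'" and b': "b' \<in> hom C Q' R'"
    and sq: "cp C b u = cp C v a" and sq': "cp C b' v = cp C w a'"
  shows "cp C (cp C b' b) u = cp C w (cp C a' a)"
proof -
  have "cp C (cp C b' b) u = cp C b' (cp C v a)"
    using comp_assoc[OF u b b'] sq by simp
  also have "\<dots> = cp C (cp C w a') a"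
    using comp_assoc[OF a v b'] sq' by simp
  also have "\<dots> = cp C w (cp C a' a)"
    using comp_assoc[OF a a' w] by simp
  finally show ?thesis .
qed

lemma unit_ob: "unt C \<in> ob C"
  and tensor_ob: "A \<in> ob C \<Longrightarrow> B \<in> ob C \<Longrightarrow> tob C A B \<in> ob C"
  using monoidal_cat unfolding monoidal_cat_def by auto

lemma tensor_in_hom:
  "f \<in> hom C A B \<Longrightarrow> g \<in> hom C A' B' \<Longrightarrow> tar C f g \<in> hom C (tob C A A') (tob C B B')"
  using monoidal_cat unfolding monoidal_cat_def hom_def by auto

lemma tensor_id: "A \<in> ob C \<Longrightarrow> B \<in> ob C \<Longrightarrow> tar C (idm C A) (idm C B) = idm C (tob C A B)"
  using monoidal_cat unfolding monoidal_cat_def by auto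

lemma interchange:
  "f \<in> hom C A B \<Longrightarrow> g \<in> hom C B D \<Longrightarrow> f' \<in> hom C A' B' \<Longrightarrow> g' \<in> hom C B' D' \<Longrightarrow>
   tar C (cp C g f) (cp C g' f') = cp C (tar C g g') (tar C f f')"
  using monoidal_cat unfolding monoidal_cat_def hom_def by auto

lemma assoc_in_hom: "A \<in> ob C \<Longrightarrow> B \<in> ob C \<Longrightarrow> D \<in> ob C \<Longrightarrow>
    asc C A B D \<in> hom C (tob C (tob C A B) D) (tob C A (tob C B D))"
  and assoc_iso: "A \<in> ob C \<Longrightarrow> B \<in> ob C \<Longrightarrow> D \<in> ob C \<Longrightarrow> iso_arr C (asc C A B D)"
  and lu_in_hom: "A \<in> ob C \<Longrightarrow> lu C A \<in> hom C (tob C (unt C) A) A"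
  and lu_iso: "A \<in> ob C \<Longrightarrow> iso_arr C (lu C A)"
  and ru_in_hom: "A \<in> ob C \<Longrightarrow> ru C A \<in> hom C (tob C A (unt C)) A"
  and ru_iso: "A \<in> ob C \<Longrightarrow> iso_arr C (ru C A)"
  using monoidal_cat unfolding monoidal_cat_def by auto

lemma assoc_natural: "f \<in> hom C A A' \<Longrightarrow> g \<in> hom C B B' \<Longrightarrow> h \<in> hom C D D' \<Longrightarrow>
    cp C (asc C A' B' D') (tar C (tar C f g) h) = cp C (tar C f (tar C g h)) (asc C A B D)"
  using monoidal_cat unfolding monoidal_cat_def hom_def by auto

lemma sym_in_hom: "A \<in> ob C \<Longrightarrow> B \<in> ob C \<Longrightarrow> sy C A B \<in> hom C (tob C A B) (tob C B A)"
  using sym_monoidal_cat unfolding sym_monoidal_cat_def by auto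

lemma sym_natural: "f \<in> hom C A A' \<Longrightarrow> g \<in> hom C B B' \<Longrightarrow>
    cp C (sy C A' B') (tar C f g) = cp C (tar C g f) (sy C A B)"
  using sym_monoidal_cat unfolding sym_monoidal_cat_def hom_def by auto

lemma sym_sym: "A \<in> ob C \<Longrightarrow> B \<in> ob C \<Longrightarrow> cp C (sy C B A) (sy C A B) = idm C (tob C A B)"
  using sym_monoidal_cat unfolding sym_monoidal_cat_def by auto

lemma is_inv_iff: "f \<in> hom C A B \<Longrightarrow>
    is_inv C f g \<longleftrightarrow> g \<in> hom C B A \<and> cp C g f = idm C A \<and> cp C f g = idm C B"
  unfolding is_inv_def hom_def by auto

lemma iso_arrI:
  "f \<in> hom C A B \<Longrightarrow> g \<in> hom C B A \<Longrightarrow> cp C g f = idm C A \<Longrightarrow> cp C f g = idm C B \<Longrightarrow> iso_arr C f"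
  unfolding iso_arr_def using is_inv_iff by blast

lemma is_inv_unique:
  assumes "is_inv C f g" "is_inv C f g'"
  shows "g = g'"
proof -
  have f: "f \<in> hom C (dm C f) (cd C f)"
    and g: "g \<in> hom C (cd C f) (dm C f)" and g': "g' \<in> hom C (cd C f) (dm C f)"
    using assms unfolding is_inv_def hom_def by auto
  have "g = cp C g (cp C f g')"
    using assms(2) comp_id_right[OF g] unfolding is_inv_def by simp
  also have "\<dots> = cp C (cp C g f) g'"
    using comp_assoc[OF g' f g] .
  also have "\<dots> = g'"
    using assms(1) comp_id_left[OF g'] unfolding is_inv_def by simp
  finally show ?thesis .
qed

lemma inv_arr_eqI: "is_inv C f g \<Longrightarrow> inv_arr C f = g"
  unfolding inv_arr_def using is_inv_unique by blast

lemma
  assumes "f \<in> hom C A B" "iso_arr C f"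
  shows inv_arr_in_hom: "inv_arr C f \<in> hom C B A"
    and inv_arr_comp_left: "cp C (inv_arr C f) f = idm C A"
    and inv_arr_comp_right: "cp C f (inv_arr C f) = idm C B"
  using assms inv_arr_eqI is_inv_iff unfolding iso_arr_def by metis+

lemma iso_inv_arr: "f \<in> hom C A B \<Longrightarrow> iso_arr C f \<Longrightarrow> iso_arr C (inv_arr C f)"
  by (metis iso_arrI inv_arr_in_hom inv_arr_comp_left inv_arr_comp_right)

lemma iso_id: "A \<in> ob C \<Longrightarrow> iso_arr C (idm C A)"
  using iso_arrI id_in_hom comp_id_left by metis

lemma iso_comp:
  assumes f: "f \<in> hom C A B" "iso_arr C f" and g: "g \<in> hom C B D" "iso_arr C g"
  shows "iso_arr C (cp C g f)"
proof (rule iso_arrI)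
  note f' = inv_arr_in_hom[OF f] and g' = inv_arr_in_hom[OF g]
  show "cp C g f \<in> hom C A D" "cp C (inv_arr C f) (inv_arr C g) \<in> hom C D A"
    using comp_in_hom f g f' g' by blast+
  have "cp C (cp C (inv_arr C g) g) f = f"
    using inv_arr_comp_left[OF g] comp_id_left[OF f(1)] by simp
  then show "cp C (cp C (inv_arr C f) (inv_arr C g)) (cp C g f) = idm C A"
    using comp_assoc[OF comp_in_hom[OF f(1) g(1)] g' f'] comp_assoc[OF f(1) g(1) g']
      inv_arr_comp_left[OF f] by simp
  have "cp C (cp C f (inv_arr C f)) (inv_arr C g) = inv_arr C g"
    using inv_arr_comp_right[OF f] comp_id_left[OF g'] by simp
  then show "cp C (cp C g f) (cp C (inv_arr C f) (inv_arr C g)) = idm C D"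
    using comp_assoc[OF comp_in_hom[OF g' f'] f(1) g(1)] comp_assoc[OF g' f' f(1)]
      inv_arr_comp_right[OF g] by simp
qed

lemma iso_tensor:
  assumes f: "f \<in> hom C A B" "iso_arr C f" and g: "g \<in> hom C A' B'" "iso_arr C g"
  shows "iso_arr C (tar C f g)"
proof (rule iso_arrI)
  note f' = inv_arr_in_hom[OF f] and g' = inv_arr_in_hom[OF g]
  have obs: "A \<in> ob C" "B \<in> ob C" "A' \<in> ob C" "B' \<in> ob C"
    using hom_ob f g by auto
  show "tar C f g \<in> hom C (tob C A A') (tob C B B')"
    "tar C (inv_arr C f) (inv_arr C g) \<in> hom C (tob C B B') (tob C A A')"
    using tensor_in_hom f g f' g' by blast+
  show "cp C (tar C (inv_arr C f) (inv_arr C g)) (tar C f g) = idm C (tob C A A')"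
    using interchange[OF f(1) f' g(1) g'] inv_arr_comp_left[OF f] inv_arr_comp_left[OF g]
      tensor_id obs by simp
  show "cp C (tar C f g) (tar C (inv_arr C f) (inv_arr C g)) = idm C (tob C B B')"
    using interchange[OF f' f(1) g' g(1)] inv_arr_comp_right[OF f] inv_arr_comp_right[OF g]
      tensor_id obs by simp
qed

lemma inv_arr_square:
  assumes a: "a \<in> hom C P Q" "iso_arr C a" and b: "b \<in> hom C P' Q'" "iso_arr C b"
    and u: "u \<in> hom C P P'" and v: "v \<in> hom C Q Q'" and sq: "cp C b u = cp C v a"
  shows "cp C (inv_arr C b) v = cp C u (inv_arr C a)"
proof -
  note a' = inv_arr_in_hom[OF a] and b' = inv_arr_in_hom[OF b]
  have "cp C (inv_arr C b) v = cp C (inv_arr C b) (cp C (cp C v a) (inv_arr C a))"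
    using comp_assoc[OF a' a(1) v] inv_arr_comp_right[OF a] comp_id_right[OF v] by simp
  also have "\<dots> = cp C (cp C (inv_arr C b) b) (cp C u (inv_arr C a))"
    using sq comp_assoc[OF a' u b(1)] comp_assoc[OF comp_in_hom[OF a' u] b(1) b'] by simp
  also have "\<dots> = cp C u (inv_arr C a)"
    using inv_arr_comp_left[OF b] comp_id_left[OF comp_in_hom[OF a' u]] by simp
  finally show ?thesis .
qed

lemma conj_by_iso:
  assumes a: "a \<in> hom C P Q" "iso_arr C a" and b: "b \<in> hom C P' Q'"
    and u: "u \<in> hom C P P'" and v: "v \<in> hom C Q Q'" and sq: "cp C b u = cp C v a"
  shows "cp C b (cp C u (inv_arr C a)) = v"
proof -
  note a' = inv_arr_in_hom[OF a]
  have "cp C b (cp C u (inv_arr C a)) = cp C (cp C v a) (inv_arr C a)"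
    using comp_assoc[OF a' u b] sq by simp
  also have "\<dots> = v"
    using comp_assoc[OF a' a(1) v] inv_arr_comp_right[OF a] comp_id_right[OF v] by simp
  finally show ?thesis .
qed

lemma struct_arrs_iso: "f \<in> struct_arrs C \<Longrightarrow> f \<in> ar C \<and> iso_arr C f"
proof (induction rule: struct_arrs.induct)
  case (s_sym A B)
  then show ?case
    using iso_arrI[OF sym_in_hom sym_in_hom] sym_sym hom_ar sym_in_hom by metis
next
  case (s_tens f g)
  then show ?case
    using iso_tensor[OF ar_in_hom _ ar_in_hom] tensor_in_hom[OF ar_in_hom ar_in_hom] hom_ar by metis
next
  case (s_comp f g)
  then have "f \<in> hom C (dm C f) (dm C g)" "g \<in> hom C (dm C g) (cd C g)"
    using ar_in_hom by metis+
  then show ?case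
    using iso_comp comp_in_hom hom_ar s_comp.IH by metis
qed (use id_in_hom iso_id assoc_in_hom assoc_iso lu_in_hom lu_iso ru_in_hom ru_iso
      inv_arr_in_hom iso_inv_arr hom_ar tensor_ob unit_ob in metis)+


lemma tens_obs_Cons: "xs \<noteq> [] \<Longrightarrow> tens_obs C (x # xs) = tob C x (tens_obs C xs)"
  by (cases xs) auto

lemma tens_ars_Cons: "xs \<noteq> [] \<Longrightarrow> tens_ars C (x # xs) = tar C x (tens_ars C xs)"
  by (cases xs) auto

lemma tens_obs_ob: "\<forall>x\<in>set xs. x \<in> ob C \<Longrightarrow> tens_obs C xs \<in> ob C"
  by (induction xs rule: induct_list012) (auto simp: unit_ob tensor_ob)

lemma tens_ars_in_hom: "\<forall>k\<in>set ks. F k \<in> hom C (X k) (Y k) \<Longrightarrow>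
    tens_ars C (map F ks) \<in> hom C (tens_obs C (map X ks)) (tens_obs C (map Y ks))"
  by (induction ks rule: induct_list012) (auto simp: id_in_hom unit_ob tensor_in_hom)

lemma tens_ars_comp:
  "\<forall>k\<in>set ks. F k \<in> hom C (X k) (Y k) \<and> G k \<in> hom C (Y k) (Z k) \<Longrightarrow>
    cp C (tens_ars C (map G ks)) (tens_ars C (map F ks)) = tens_ars C (map (\<lambda>k. cp C (G k) (F k)) ks)"
proof (induction ks rule: induct_list012)
  case 1
  then show ?case using comp_id_left[OF id_in_hom[OF unit_ob]] by simp
next
  case (3 x y zs)
  have x: "F x \<in> hom C (X x) (Y x)" "G x \<in> hom C (Y x) (Z x)"
    using 3(3) by simp_all
  have ys: "tens_ars C (map F (y # zs)) \<in> hom C (tens_obs C (map X (y # zs))) (tens_obs C (map Y (y # zs)))"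
    "tens_ars C (map G (y # zs)) \<in> hom C (tens_obs C (map Y (y # zs))) (tens_obs C (map Z (y # zs)))"
    using 3(3) tens_ars_in_hom[of "y # zs" F X Y] tens_ars_in_hom[of "y # zs" G Y Z] by simp_all
  show ?case
    using interchange[OF x(1) x(2) ys] 3 by simp
qed simp

lemma tens_ars_iso: "\<forall>k\<in>set ks. F k \<in> hom C (X k) (Y k) \<and> iso_arr C (F k) \<Longrightarrow>
    iso_arr C (tens_ars C (map F ks))"
proof (induction ks rule: induct_list012)
  case 1
  then show ?case using iso_id[OF unit_ob] by simp
next
  case (3 x y zs)
  have ys: "tens_ars C (map F (y # zs)) \<in> hom C (tens_obs C (map X (y # zs))) (tens_obs C (map Y (y # zs)))"
    using 3(3) tens_ars_in_hom[of "y # zs" F X Y] by simp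
  show ?case
    using iso_tensor[of "F x" "X x" "Y x", OF _ _ ys] 3 by simp
qed simp

context
  fixes FO FM
  assumes F: "strict_monoidal_autofunctor C FO FM"
begin

lemma functor_ob: "A \<in> ob C \<Longrightarrow> FO A \<in> ob C"
  and functor_in_hom: "f \<in> hom C A B \<Longrightarrow> FM f \<in> hom C (FO A) (FO B)"
  and functor_id: "A \<in> ob C \<Longrightarrow> FM (idm C A) = idm C (FO A)"
  and functor_comp: "f \<in> hom C A B \<Longrightarrow> g \<in> hom C B D \<Longrightarrow> FM (cp C g f) = cp C (FM g) (FM f)"
  and functor_unit: "FO (unt C) = unt C"
  and functor_tensor_ob: "A \<in> ob C \<Longrightarrow> B \<in> ob C \<Longrightarrow> FO (tob C A B) = tob C (FO A) (FO B)"
  and functor_tensor: "f \<in> ar C \<Longrightarrow> g \<in> ar C \<Longrightarrow> FM (tar C f g) = tar C (FM f) (FM g)"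
  using F unfolding strict_monoidal_autofunctor_def functor_on_def hom_def by auto

lemma functor_iso:
  assumes f: "f \<in> hom C A B" "iso_arr C f"
  shows "iso_arr C (FM f)"
proof (rule iso_arrI)
  note f' = inv_arr_in_hom[OF f]
  have obs: "A \<in> ob C" "B \<in> ob C" using hom_ob f by auto
  show "FM f \<in> hom C (FO A) (FO B)" "FM (inv_arr C f) \<in> hom C (FO B) (FO A)"
    using functor_in_hom f f' by blast+
  show "cp C (FM (inv_arr C f)) (FM f) = idm C (FO A)"
    using functor_comp[OF f(1) f'] inv_arr_comp_left[OF f] functor_id obs by simp
  show "cp C (FM f) (FM (inv_arr C f)) = idm C (FO B)"
    using functor_comp[OF f' f(1)] inv_arr_comp_right[OF f] functor_id obs by simp
qed

lemma functor_tens_obs: "\<forall>x\<in>set xs. x \<in> ob C \<Longrightarrow> FO (tens_obs C xs) = tens_obs C (map FO xs)"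
proof (induction xs rule: induct_list012)
  case (3 x y zs)
  then show ?case using tens_obs_ob[of "y # zs"] functor_tensor_ob by simp
qed (simp_all add: functor_unit)

lemma functor_tens_ars: "\<forall>k\<in>set ks. F k \<in> hom C (X k) (Y k) \<Longrightarrow>
    FM (tens_ars C (map F ks)) = tens_ars C (map (\<lambda>k. FM (F k)) ks)"
proof (induction ks rule: induct_list012)
  case 1
  then show ?case using functor_id[OF unit_ob] functor_unit by simp
next
  case (3 x y zs)
  then have "tens_ars C (map F (y # zs)) \<in> ar C" "F x \<in> ar C"
    using hom_ar tens_ars_in_hom[of "y # zs" F X Y] by auto
  then have "FM (tens_ars C (map F (x # y # zs))) = tar C (FM (F x)) (FM (tens_ars C (map F (y # zs))))"
    using functor_tensor by (metis list.simps(9) tens_ars.simps(3))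
  with 3 show ?case by simp
qed simp

end


section \<open>Natural reorderings of tensor factors\<close>

definition swap_front :: "'o \<Rightarrow> 'o \<Rightarrow> 'o \<Rightarrow> 'm" where
  "swap_front A B D =
     cp C (asc C B A D) (cp C (tar C (sy C A B) (idm C D)) (inv_arr C (asc C A B D)))"

lemma
  assumes "A \<in> ob C" "B \<in> ob C" "D \<in> ob C"
  shows swap_front_struct: "swap_front A B D \<in> struct_arrs C"
    and swap_front_in_hom: "swap_front A B D \<in> hom C (tob C A (tob C B D)) (tob C B (tob C A D))"
proof -
  have a: "asc C A B D \<in> hom C (tob C (tob C A B) D) (tob C A (tob C B D))" "iso_arr C (asc C A B D)"
    using assoc_in_hom assoc_iso assms by blast+
  have s: "tar C (sy C A B) (idm C D) \<in> hom C (tob C (tob C A B) D) (tob C (tob C B A) D)"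
    using tensor_in_hom[OF sym_in_hom id_in_hom] assms by blast
  have b: "asc C B A D \<in> hom C (tob C (tob C B A) D) (tob C B (tob C A D))"
    using assoc_in_hom assms by blast
  show "swap_front A B D \<in> hom C (tob C A (tob C B D)) (tob C B (tob C A D))"
    unfolding swap_front_def using comp_in_hom[OF comp_in_hom[OF inv_arr_in_hom[OF a] s] b] .
  have "cp C (tar C (sy C A B) (idm C D)) (inv_arr C (asc C A B D)) \<in> struct_arrs C"
    by (rule s_comp) (use assms hom_cod[OF inv_arr_in_hom[OF a]] hom_dom[OF s] in
        \<open>auto intro: struct_arrs.intros\<close>)
  then show "swap_front A B D \<in> struct_arrs C"
    unfolding swap_front_def
    by (rule s_comp) (use assms hom_cod[OF comp_in_hom[OF inv_arr_in_hom[OF a] s]] hom_dom[OF b] in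
        \<open>auto intro: struct_arrs.intros\<close>)
qed

lemma swap_front_natural:
  assumes f: "f \<in> hom C A A'" and g: "g \<in> hom C B B'" and r: "r \<in> hom C D D'"
  shows "cp C (swap_front A' B' D') (tar C f (tar C g r)) = cp C (tar C g (tar C f r)) (swap_front A B D)"
proof -
  have obs: "A \<in> ob C" "A' \<in> ob C" "B \<in> ob C" "B' \<in> ob C" "D \<in> ob C" "D' \<in> ob C"
    using hom_ob f g r by auto
  have a: "asc C A B D \<in> hom C (tob C (tob C A B) D) (tob C A (tob C B D))" "iso_arr C (asc C A B D)"
    and a': "asc C A' B' D' \<in> hom C (tob C (tob C A' B') D') (tob C A' (tob C B' D'))"
      "iso_arr C (asc C A' B' D')"
    using assoc_in_hom assoc_iso obs by blast+
  have inv_assoc_square: "cp C (inv_arr C (asc C A' B' D')) (tar C f (tar C g r))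
      = cp C (tar C (tar C f g) r) (inv_arr C (asc C A B D))"
    using inv_arr_square[OF a a' tensor_in_hom[OF tensor_in_hom[OF f g] r]
        tensor_in_hom[OF f tensor_in_hom[OF g r]] assoc_natural[OF f g r]] .
  have sym_square: "cp C (tar C (sy C A' B') (idm C D')) (tar C (tar C f g) r)
      = cp C (tar C (tar C g f) r) (tar C (sy C A B) (idm C D))"
    using interchange[OF tensor_in_hom[OF f g] sym_in_hom[OF obs(2,4)] r id_in_hom[OF obs(6)]]
      interchange[OF sym_in_hom[OF obs(1,3)] tensor_in_hom[OF g f] id_in_hom[OF obs(5)] r]
      sym_natural[OF f g] comp_id_left[OF r] comp_id_right[OF r] by simp
  show ?thesis
    unfolding swap_front_def
    by (rule paste_squares[OF _ _ _ _ _ _ _ paste_squares[OF _ _ _ _ _ _ _ inv_assoc_square sym_square]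
          assoc_natural[OF g f r]])
      (use obs f g r in \<open>auto intro: inv_arr_in_hom[OF a] inv_arr_in_hom[OF a'] comp_in_hom
          assoc_in_hom tensor_in_hom sym_in_hom id_in_hom\<close>)
qed


text \<open>Tensor factors carry labels \<open>k\<close>, so that a reordering is determined even when two factors
  are the same object; naturality in the labelling \<open>X\<close> is what makes the twisting
  isomorphisms natural.\<close>

definition natural_reordering :: "'k list \<Rightarrow> 'k list \<Rightarrow> (('k \<Rightarrow> 'o) \<Rightarrow> 'm) \<Rightarrow> bool" where
  "natural_reordering ks ls S \<longleftrightarrow>
    (\<forall>X. (\<forall>k\<in>set ks. X k \<in> ob C) \<longrightarrow>
       S X \<in> struct_arrs C \<and> S X \<in> hom C (tens_obs C (map X ks)) (tens_obs C (map X ls)))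
  \<and> (\<forall>X Y F. (\<forall>k\<in>set ks. F k \<in> hom C (X k) (Y k)) \<longrightarrow>
       cp C (S Y) (tens_ars C (map F ks)) = cp C (tens_ars C (map F ls)) (S X))"

lemma natural_reorderingI:
  assumes "\<And>X. \<forall>k\<in>set ks. X k \<in> ob C \<Longrightarrow> S X \<in> struct_arrs C"
    and "\<And>X. \<forall>k\<in>set ks. X k \<in> ob C \<Longrightarrow> S X \<in> hom C (tens_obs C (map X ks)) (tens_obs C (map X ls))"
    and "\<And>X Y F. \<forall>k\<in>set ks. F k \<in> hom C (X k) (Y k) \<Longrightarrow>
      cp C (S Y) (tens_ars C (map F ks)) = cp C (tens_ars C (map F ls)) (S X)"
  shows "natural_reordering ks ls S"
  using assms unfolding natural_reordering_def by blast

lemma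
  assumes "natural_reordering ks ls S"
  shows natural_reordering_struct: "\<forall>k\<in>set ks. X k \<in> ob C \<Longrightarrow> S X \<in> struct_arrs C"
    and natural_reordering_in_hom:
      "\<forall>k\<in>set ks. X k \<in> ob C \<Longrightarrow> S X \<in> hom C (tens_obs C (map X ks)) (tens_obs C (map X ls))"
    and natural_reordering_natural: "\<forall>k\<in>set ks. F k \<in> hom C (X k) (Y k) \<Longrightarrow>
      cp C (S Y) (tens_ars C (map F ks)) = cp C (tens_ars C (map F ls)) (S X)"
  using assms unfolding natural_reordering_def by blast+

lemma natural_reordering_id: "natural_reordering ks ks (\<lambda>X. idm C (tens_obs C (map X ks)))"
proof (rule natural_reorderingI)
  fix X Y F
  assume "\<forall>k\<in>set ks. F k \<in> hom C (X k) (Y k)"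
  from tens_ars_in_hom[OF this]
  show "cp C (idm C (tens_obs C (map Y ks))) (tens_ars C (map F ks)) =
      cp C (tens_ars C (map F ks)) (idm C (tens_obs C (map X ks)))"
    using comp_id_left comp_id_right by metis
qed (use tens_obs_ob in \<open>auto intro: s_id id_in_hom\<close>)

lemma natural_reordering_comp:
  assumes S1: "natural_reordering ks ms S1" and S2: "natural_reordering ms ls S2"
    and sets: "set ks = set ms" "set ms = set ls"
  shows "natural_reordering ks ls (\<lambda>X. cp C (S2 X) (S1 X))"
proof (rule natural_reorderingI)
  fix X
  assume X: "\<forall>k\<in>set ks. X k \<in> ob C"
  then have X': "\<forall>k\<in>set ms. X k \<in> ob C"
    using sets by simp
  note h1 = natural_reordering_in_hom[OF S1 X] and h2 = natural_reordering_in_hom[OF S2 X']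
  show "cp C (S2 X) (S1 X) \<in> hom C (tens_obs C (map X ks)) (tens_obs C (map X ls))"
    using comp_in_hom[OF h1 h2] .
  show "cp C (S2 X) (S1 X) \<in> struct_arrs C"
    using s_comp[OF natural_reordering_struct[OF S1 X] natural_reordering_struct[OF S2 X']]
      hom_cod[OF h1] hom_dom[OF h2] by simp
next
  fix X Y F
  assume F: "\<forall>k\<in>set ks. F k \<in> hom C (X k) (Y k)"
  then have obs: "\<forall>k\<in>set ks. X k \<in> ob C" "\<forall>k\<in>set ks. Y k \<in> ob C"
    using hom_ob by blast+
  have F': "\<forall>k\<in>set ms. F k \<in> hom C (X k) (Y k)" "\<forall>k\<in>set ls. F k \<in> hom C (X k) (Y k)"
    using F sets by simp_all
  show "cp C (cp C (S2 Y) (S1 Y)) (tens_ars C (map F ks)) = cp C (tens_ars C (map F ls)) (cp C (S2 X) (S1 X))"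
    by (rule paste_squares[OF _ _ _ _ _ _ _ natural_reordering_natural[OF S1 F]
          natural_reordering_natural[OF S2 F'(1)]])
      (use obs sets tens_ars_in_hom[OF F] tens_ars_in_hom[OF F'(1)] tens_ars_in_hom[OF F'(2)] in
        \<open>auto intro: natural_reordering_in_hom[OF S1] natural_reordering_in_hom[OF S2]\<close>)
qed

lemma natural_reordering_Cons:
  assumes S: "natural_reordering ks ls S" and nonempty: "ks \<noteq> []" "ls \<noteq> []"
    and sets: "set ks = set ls"
  shows "natural_reordering (y # ks) (y # ls) (\<lambda>X. tar C (idm C (X y)) (S X))"
proof (rule natural_reorderingI)
  fix X
  assume "\<forall>k\<in>set (y # ks). X k \<in> ob C"
  then have X: "\<forall>k\<in>set ks. X k \<in> ob C" "X y \<in> ob C"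
    by simp_all
  show "tar C (idm C (X y)) (S X) \<in> struct_arrs C"
    using s_tens[OF s_id[OF X(2)] natural_reordering_struct[OF S X(1)]] .
  show "tar C (idm C (X y)) (S X) \<in> hom C (tens_obs C (map X (y # ks))) (tens_obs C (map X (y # ls)))"
    using tensor_in_hom[OF id_in_hom[OF X(2)] natural_reordering_in_hom[OF S X(1)]] nonempty
    by (simp add: tens_obs_Cons)
next
  fix X Y F
  assume "\<forall>k\<in>set (y # ks). F k \<in> hom C (X k) (Y k)"
  then have F: "\<forall>k\<in>set ks. F k \<in> hom C (X k) (Y k)" "\<forall>k\<in>set ls. F k \<in> hom C (X k) (Y k)"
    and Fy: "F y \<in> hom C (X y) (Y y)"
    using sets by simp_all
  have obs: "\<forall>k\<in>set ks. X k \<in> ob C" "\<forall>k\<in>set ks. Y k \<in> ob C" "X y \<in> ob C" "Y y \<in> ob C"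
    using hom_ob F(1) Fy by blast+
  have "cp C (tar C (idm C (Y y)) (S Y)) (tar C (F y) (tens_ars C (map F ks)))
      = tar C (cp C (F y) (idm C (X y))) (cp C (tens_ars C (map F ls)) (S X))"
    using interchange[OF Fy id_in_hom[OF obs(4)] tens_ars_in_hom[OF F(1)]
        natural_reordering_in_hom[OF S obs(2)]]
      comp_id_left[OF Fy] comp_id_right[OF Fy] natural_reordering_natural[OF S F(1)] by simp
  also have "\<dots> = cp C (tar C (F y) (tens_ars C (map F ls))) (tar C (idm C (X y)) (S X))"
    using interchange[OF id_in_hom[OF obs(3)] Fy natural_reordering_in_hom[OF S obs(1)]
        tens_ars_in_hom[OF F(2)]] .
  finally show "cp C (tar C (idm C (Y y)) (S Y)) (tens_ars C (map F (y # ks))) =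
      cp C (tens_ars C (map F (y # ls))) (tar C (idm C (X y)) (S X))"
    using nonempty by (simp add: tens_ars_Cons)
qed

lemma natural_reordering_swap: "natural_reordering [x, y] [y, x] (\<lambda>X. sy C (X x) (X y))"
  by (rule natural_reorderingI) (auto intro: s_sym sym_in_hom sym_natural)

lemma natural_reordering_swap_front:
  assumes "R \<noteq> []"
  shows "natural_reordering (x # y # R) (y # x # R) (\<lambda>X. swap_front (X x) (X y) (tens_obs C (map X R)))"
proof (rule natural_reorderingI)
  fix X
  assume "\<forall>k\<in>set (x # y # R). X k \<in> ob C"
  then have obs: "X x \<in> ob C" "X y \<in> ob C" "tens_obs C (map X R) \<in> ob C"
    using tens_obs_ob by simp_all
  show "swap_front (X x) (X y) (tens_obs C (map X R)) \<in> struct_arrs C"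
    using swap_front_struct[OF obs] .
  show "swap_front (X x) (X y) (tens_obs C (map X R))
      \<in> hom C (tens_obs C (map X (x # y # R))) (tens_obs C (map X (y # x # R)))"
    using swap_front_in_hom[OF obs] assms by (simp add: tens_obs_Cons)
next
  fix X Y F
  assume F: "\<forall>k\<in>set (x # y # R). F k \<in> hom C (X k) (Y k)"
  then have "tens_ars C (map F R) \<in> hom C (tens_obs C (map X R)) (tens_obs C (map Y R))"
    by (simp add: tens_ars_in_hom)
  with F show "cp C (swap_front (Y x) (Y y) (tens_obs C (map Y R))) (tens_ars C (map F (x # y # R))) =
      cp C (tens_ars C (map F (y # x # R))) (swap_front (X x) (X y) (tens_obs C (map X R)))"
    using swap_front_natural assms by (simp add: tens_ars_Cons)
qed

lemma natural_reordering_move_front: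
  "distinct xs \<Longrightarrow> y \<in> set xs \<Longrightarrow> \<exists>S. natural_reordering xs (y # remove1 y xs) S"
proof (induction xs)
  case (Cons x xs)
  show ?case
  proof (cases "y = x")
    case True
    then show ?thesis using natural_reordering_id by auto
  next
    case False
    then have y: "y \<in> set xs" and d: "distinct xs"
      using Cons.prems by auto
    define R where "R = remove1 y xs"
    obtain S where S: "natural_reordering xs (y # R) S"
      using Cons.IH[OF d y] unfolding R_def by blast
    have rm: "remove1 y (x # xs) = x # R" and setR: "set xs = set (y # R)"
      using False d y unfolding R_def by (auto simp: set_remove1_eq)
    show ?thesis
    proof (cases "R = []")
      case True
      then have "xs = [y]"
        using setR d by (cases xs) (auto simp: subset_singleton_iff)
      then show ?thesis
        using rm True natural_reordering_swap[of x y] by auto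
    next
      case False
      have "xs \<noteq> []"
        using y by auto
      then have "natural_reordering (x # xs) (x # y # R) (\<lambda>X. tar C (idm C (X x)) (S X))"
        using natural_reordering_Cons[OF S _ _ setR] by simp
      from natural_reordering_comp[OF this natural_reordering_swap_front[OF False]]
      show ?thesis
        using rm setR by auto
    qed
  qed
qed simp

lemma natural_reordering_exists:
  "distinct ks \<Longrightarrow> distinct ls \<Longrightarrow> set ks = set ls \<Longrightarrow> \<exists>S. natural_reordering ks ls S"
proof (induction ls arbitrary: ks)
  case Nil
  then show ?case using natural_reordering_id by auto
next
  case (Cons y ls)
  define R where "R = remove1 y ks"
  obtain M where M: "natural_reordering ks (y # R) M"
    using natural_reordering_move_front Cons.prems unfolding R_def by fastforce
  have setR: "set R = set ls"
    using Cons.prems unfolding R_def by (auto simp: set_remove1_eq)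
  obtain P where P: "natural_reordering R ls P"
    using Cons.IH[of R] Cons.prems setR unfolding R_def by auto
  show ?case
  proof (cases "ls = []")
    case True
    then show ?thesis using M setR by auto
  next
    case False
    with setR have "R \<noteq> []" by auto
    from natural_reordering_comp[OF M natural_reordering_Cons[OF P this False setR]]
    show ?thesis
      using setR Cons.prems(3) by auto
  qed
qed

end

section \<open>Translating a transversal\<close>

lemma (in group) transversal_translation:
  assumes H: "subgroup H G" and T: "left_transversal G H ts" and g: "g \<in> carrier G"
  obtains \<psi> h where "bij_betw \<psi> (set ts) (set ts)" "\<forall>t\<in>set ts. h t \<in> H"
    "\<forall>t\<in>set ts. \<psi> t \<otimes> h (\<psi> t) = g \<otimes> t"
proof -
  have ts: "set ts \<subseteq> carrier G" and rep: "\<And>x. x \<in> carrier G \<Longrightarrow> \<exists>!t. t \<in> set ts \<and> x \<in> t <# H"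
    using T unfolding left_transversal_def by auto
  obtain \<psi> where \<psi>: "\<forall>t\<in>set ts. \<psi> t \<in> set ts \<and> g \<otimes> t \<in> \<psi> t <# H"
    using bchoice[of "set ts" "\<lambda>t s. s \<in> set ts \<and> g \<otimes> t \<in> s <# H"] rep g ts by blast
  have "inj_on \<psi> (set ts)"
  proof (rule inj_onI)
    fix t t'
    assume t: "t \<in> set ts" and t': "t' \<in> set ts" and eq: "\<psi> t = \<psi> t'"
    have tG: "t \<in> carrier G" "t' \<in> carrier G" "\<psi> t \<in> carrier G"
      using t t' \<psi> ts by auto
    have "(g \<otimes> t) <# H = (g \<otimes> t') <# H"
      using l_repr_independence[OF _ tG(3) H] \<psi> t t' eq by metis
    then have "(inv g \<otimes> (g \<otimes> t)) <# H = (inv g \<otimes> (g \<otimes> t')) <# H"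
      using lcos_m_assoc[OF subgroup.subset[OF H] inv_closed[OF g]] g tG by (metis m_closed)
    then have "t' \<in> t <# H"
      using lcos_self[OF tG(2) H] g tG by (simp add: m_assoc[symmetric])
    then show "t = t'"
      using rep[OF tG(2)] lcos_self[OF tG(2) H] t t' by blast
  qed
  then have bij: "bij_betw \<psi> (set ts) (set ts)"
    using endo_inj_surj[of "set ts" \<psi>] \<psi> by (auto simp: bij_betw_def)
  define h where "h s = inv s \<otimes> (g \<otimes> the_inv_into (set ts) \<psi> s)" for s
  have h\<psi>: "h (\<psi> t) = inv (\<psi> t) \<otimes> (g \<otimes> t)" if "t \<in> set ts" for t
    unfolding h_def using the_inv_into_f_f[OF bij_betw_imp_inj_on[OF bij] that] by simp
  show thesis
  proof
    show "bij_betw \<psi> (set ts) (set ts)"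
      using bij .
    show "\<forall>t\<in>set ts. \<psi> t \<otimes> h (\<psi> t) = g \<otimes> t"
      using h\<psi> \<psi> ts g by (simp add: subset_iff m_assoc[symmetric])
    have "\<forall>t\<in>set ts. h (\<psi> t) \<in> H"
      using h\<psi> \<psi> ts g subgroup.lcos_module_imp[OF H is_group] by (simp add: subset_iff)
    then show "\<forall>t\<in>set ts. h t \<in> H"
      using bij by (metis bij_betw_imp_surj_on imageE)
  qed
qed

section \<open>The twisting isomorphisms\<close>

locale folding_data = sym_monoidal C + group G
  for C :: "('o, 'm, 'x) smcat_scheme" and G :: "('g, 'b) monoid_scheme" (structure) +
  fixes H :: "'g set" and phiO :: "'g \<Rightarrow> 'o \<Rightarrow> 'o" and phiM :: "'g \<Rightarrow> 'm \<Rightarrow> 'm"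
    and eta :: "'g \<Rightarrow> 'o \<Rightarrow> 'm" and ts :: "'g list"
  assumes action: "strict_action C G phiO phiM"
    and subgroup: "subgroup H G"
    and eta_data: "eta_data C G H phiO phiM eta"
    and transversal: "left_transversal G H ts"
begin

lemma transversal_carrier: "t \<in> set ts \<Longrightarrow> t \<in> carrier G"
  and transversal_distinct: "distinct ts"
  using transversal unfolding left_transversal_def by auto

lemma subgroup_carrier: "k \<in> H \<Longrightarrow> k \<in> carrier G"
  using subgroup.mem_carrier[OF subgroup] .

lemma action_functor: "a \<in> carrier G \<Longrightarrow> strict_monoidal_autofunctor C (phiO a) (phiM a)"
  and action_ob_mult: "a \<in> carrier G \<Longrightarrow> b \<in> carrier G \<Longrightarrow> A \<in> ob C \<Longrightarrow>
    phiO a (phiO b A) = phiO (a \<otimes> b) A"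
  and action_ar_mult: "a \<in> carrier G \<Longrightarrow> b \<in> carrier G \<Longrightarrow> f \<in> ar C \<Longrightarrow>
    phiM a (phiM b f) = phiM (a \<otimes> b) f"
  using action unfolding strict_action_def by auto

lemma eta_in_hom: "k \<in> H \<Longrightarrow> A \<in> ob C \<Longrightarrow> eta k A \<in> hom C A (phiO k A)"
  and eta_iso: "k \<in> H \<Longrightarrow> A \<in> ob C \<Longrightarrow> iso_arr C (eta k A)"
  using eta_data unfolding eta_data_def by auto

lemma hat_hom_inv_eta:
  assumes f: "f \<in> hat_hom C H phiO phiM eta A B" and k: "k \<in> H"
  shows "cp C (inv_arr C (eta k B)) (phiM k f) = cp C f (inv_arr C (eta k A))"
proof -
  have fAB: "f \<in> hom C A B" and sq: "cp C (phiM k f) (eta k A) = cp C (eta k B) f"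
    using f k unfolding hat_hom_def by auto
  have obs: "A \<in> ob C" "B \<in> ob C"
    using hom_ob[OF fAB] by auto
  show ?thesis
    using inv_arr_square[OF eta_in_hom[OF k obs(1)] eta_iso[OF k obs(1)] eta_in_hom[OF k obs(2)]
        eta_iso[OF k obs(2)] fAB functor_in_hom[OF action_functor[OF subgroup_carrier[OF k]] fAB]]
      sq by simp
qed

lemma fold_arr_in_hom: "f \<in> hom C A B \<Longrightarrow>
    fold_arr C phiM ts f \<in> hom C (fold_obj C phiO ts A) (fold_obj C phiO ts B)"
  unfolding fold_arr_def fold_obj_def
  by (rule tens_ars_in_hom) (simp add: functor_in_hom[OF action_functor] transversal_carrier)

end

text \<open>\<open>h t\<close> is the element \<open>h\<^sub>t\<close> of the paper: \<open>t \<otimes> h t\<close> is the representative of \<open>t H\<close>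
  in the transversal \<open>g T\<close>.\<close>

locale folding_twist = folding_data C G H phiO phiM eta ts
  for C :: "('o, 'm, 'x) smcat_scheme" and G :: "('g, 'b) monoid_scheme" (structure)
    and H phiO phiM eta ts +
  fixes g :: 'g and \<psi> :: "'g \<Rightarrow> 'g" and h :: "'g \<Rightarrow> 'g" and S :: "('g \<Rightarrow> 'o) \<Rightarrow> 'm"
  assumes g: "g \<in> carrier G"
    and \<psi>_bij: "bij_betw \<psi> (set ts) (set ts)"
    and h_in_subgroup: "t \<in> set ts \<Longrightarrow> h t \<in> H"
    and \<psi>_h: "t \<in> set ts \<Longrightarrow> \<psi> t \<otimes> h (\<psi> t) = g \<otimes> t"
    and S: "natural_reordering (map \<psi> ts) ts S"
begin

definition twisted :: "'o \<Rightarrow> 'g \<Rightarrow> 'o" where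
  "twisted A t = phiO (t \<otimes> h t) A"

definition rho :: "'o \<Rightarrow> 'm" where
  "rho A = tens_ars C (map (\<lambda>t. phiM t (inv_arr C (eta (h t) A))) ts)"

definition alpha :: "'o \<Rightarrow> 'm" where
  "alpha A = cp C (rho A) (S (twisted A))"

lemma \<psi>_in_transversal: "t \<in> set ts \<Longrightarrow> \<psi> t \<in> set ts"
  using \<psi>_bij bij_betwE by blast

lemma twisted_in_translate:
  assumes t: "t \<in> set ts"
  shows "t \<otimes> h t \<in> (\<lambda>s. g \<otimes> s) ` set ts"
proof -
  obtain s where "s \<in> set ts" "t = \<psi> s"
    using t bij_betw_imp_surj_on[OF \<psi>_bij] by blast
  then show ?thesis
    using \<psi>_h by auto
qed

lemma twisted_ob:
  assumes A: "A \<in> ob C" and t: "t \<in> set ts"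
  shows "twisted A t \<in> ob C"
proof -
  have "t \<otimes> h t \<in> carrier G"
    using transversal_carrier[OF t] subgroup_carrier[OF h_in_subgroup[OF t]] by simp
  then show ?thesis
    unfolding twisted_def using functor_ob[OF action_functor A] by blast
qed

lemma action_fold_obj:
  assumes A: "A \<in> ob C"
  shows "phiO g (fold_obj C phiO ts A) = tens_obs C (map (twisted A) (map \<psi> ts))"
proof -
  have "phiO g (fold_obj C phiO ts A) = tens_obs C (map (\<lambda>t. phiO g (phiO t A)) ts)"
    unfolding fold_obj_def
    using functor_tens_obs[OF action_functor[OF g]] functor_ob[OF action_functor] A
      transversal_carrier by (simp add: o_def)
  also have "\<dots> = tens_obs C (map (twisted A) (map \<psi> ts))"
    unfolding twisted_def
    using action_ob_mult[OF g transversal_carrier A] \<psi>_h by (simp cong: map_cong)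
  finally show ?thesis .
qed

lemma action_fold_arr:
  assumes f: "f \<in> hom C A B"
  shows "phiM g (fold_arr C phiM ts f) = tens_ars C (map (\<lambda>t. phiM (t \<otimes> h t) f) (map \<psi> ts))"
proof -
  have "phiM g (fold_arr C phiM ts f) = tens_ars C (map (\<lambda>t. phiM g (phiM t f)) ts)"
    unfolding fold_arr_def
    by (rule functor_tens_ars[OF action_functor[OF g], of ts _ "\<lambda>t. phiO t A" "\<lambda>t. phiO t B"])
      (simp add: functor_in_hom[OF action_functor[OF transversal_carrier] f])
  also have "\<dots> = tens_ars C (map (\<lambda>t. phiM (t \<otimes> h t) f) (map \<psi> ts))"
    using action_ar_mult[OF g transversal_carrier hom_ar[OF f]] \<psi>_h by (simp cong: map_cong)
  finally show ?thesis .
qed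

lemma twisted_arr_in_hom:
  assumes f: "f \<in> hom C A B" and t: "t \<in> set ts"
  shows "phiM (t \<otimes> h t) f \<in> hom C (twisted A t) (twisted B t)"
  unfolding twisted_def using functor_in_hom[OF action_functor f] transversal_carrier[OF t]
    subgroup_carrier[OF h_in_subgroup[OF t]] by simp

lemma rho_factor:
  assumes A: "A \<in> ob C" and t: "t \<in> set ts"
  shows "phiM t (inv_arr C (eta (h t) A)) \<in> hom C (twisted A t) (phiO t A)"
    and "iso_arr C (phiM t (inv_arr C (eta (h t) A)))"
proof -
  note k = h_in_subgroup[OF t] and F = action_functor[OF transversal_carrier[OF t]]
  show "phiM t (inv_arr C (eta (h t) A)) \<in> hom C (twisted A t) (phiO t A)"
    unfolding twisted_def
    using functor_in_hom[OF F inv_arr_in_hom[OF eta_in_hom[OF k A] eta_iso[OF k A]]]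
      action_ob_mult[OF transversal_carrier[OF t] subgroup_carrier[OF k] A] by simp
  show "iso_arr C (phiM t (inv_arr C (eta (h t) A)))"
    using functor_iso[OF F inv_arr_in_hom iso_inv_arr] eta_in_hom[OF k A] eta_iso[OF k A] by blast
qed

lemma
  assumes A: "A \<in> ob C"
  shows rho_in_hom: "rho A \<in> hom C (tens_obs C (map (twisted A) ts)) (fold_obj C phiO ts A)"
    and rho_iso: "iso_arr C (rho A)"
  unfolding rho_def fold_obj_def
  by (simp_all add: rho_factor[OF A] tens_ars_in_hom tens_ars_iso[of _ _ "twisted A" "\<lambda>t. phiO t A"])

lemma rho_natural:
  assumes f: "f \<in> hat_hom C H phiO phiM eta A B"
  shows "cp C (rho B) (tens_ars C (map (\<lambda>t. phiM (t \<otimes> h t) f) ts))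
    = cp C (fold_arr C phiM ts f) (rho A)"
proof -
  have fAB: "f \<in> hom C A B"
    using f unfolding hat_hom_def by simp
  have obs: "A \<in> ob C" "B \<in> ob C"
    using hom_ob[OF fAB] by auto
  have factor_natural: "cp C (phiM t (inv_arr C (eta (h t) B))) (phiM (t \<otimes> h t) f)
      = cp C (phiM t f) (phiM t (inv_arr C (eta (h t) A)))" if t: "t \<in> set ts" for t
  proof -
    note k = h_in_subgroup[OF t] and tG = transversal_carrier[OF t]
    note F = action_functor[OF tG] and kG = subgroup_carrier[OF k]
    have "cp C (phiM t (inv_arr C (eta (h t) B))) (phiM (t \<otimes> h t) f)
        = phiM t (cp C (inv_arr C (eta (h t) B)) (phiM (h t) f))"
      using functor_comp[OF F functor_in_hom[OF action_functor[OF kG] fAB]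
          inv_arr_in_hom[OF eta_in_hom[OF k obs(2)] eta_iso[OF k obs(2)]]]
        action_ar_mult[OF tG kG hom_ar[OF fAB]] by simp
    also have "\<dots> = phiM t (cp C f (inv_arr C (eta (h t) A)))"
      using hat_hom_inv_eta[OF f k] by simp
    also have "\<dots> = cp C (phiM t f) (phiM t (inv_arr C (eta (h t) A)))"
      using functor_comp[OF F inv_arr_in_hom[OF eta_in_hom[OF k obs(1)] eta_iso[OF k obs(1)]] fAB] .
    finally show ?thesis .
  qed
  have "cp C (rho B) (tens_ars C (map (\<lambda>t. phiM (t \<otimes> h t) f) ts))
      = tens_ars C (map (\<lambda>t. cp C (phiM t (inv_arr C (eta (h t) B))) (phiM (t \<otimes> h t) f)) ts)"
    unfolding rho_def
    by (rule tens_ars_comp[of _ _ "twisted A" "twisted B" _ "\<lambda>t. phiO t B"])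
      (simp add: twisted_arr_in_hom[OF fAB] rho_factor(1)[OF obs(2)])
  also have "\<dots> = tens_ars C (map (\<lambda>t. cp C (phiM t f) (phiM t (inv_arr C (eta (h t) A)))) ts)"
    using factor_natural by (simp cong: map_cong)
  also have "\<dots> = cp C (fold_arr C phiM ts f) (rho A)"
    unfolding rho_def fold_arr_def
    by (rule tens_ars_comp[of _ _ "twisted A" "\<lambda>t. phiO t A" _ "\<lambda>t. phiO t B", symmetric])
      (simp add: rho_factor(1)[OF obs(1)] functor_in_hom[OF action_functor[OF transversal_carrier] fAB])
  finally show ?thesis .
qed

lemma
  assumes A: "A \<in> ob C"
  shows reordering_struct: "S (twisted A) \<in> struct_arrs C"
    and reordering_in_hom:
      "S (twisted A) \<in> hom C (phiO g (fold_obj C phiO ts A)) (tens_obs C (map (twisted A) ts))"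
proof -
  have "\<forall>k\<in>set (map \<psi> ts). twisted A k \<in> ob C"
    using twisted_ob[OF A] \<psi>_in_transversal by simp
  then show "S (twisted A) \<in> struct_arrs C"
    "S (twisted A) \<in> hom C (phiO g (fold_obj C phiO ts A)) (tens_obs C (map (twisted A) ts))"
    using natural_reordering_struct[OF S] natural_reordering_in_hom[OF S] action_fold_obj[OF A]
    by simp_all
qed

lemma
  assumes A: "A \<in> ob C"
  shows alpha_in_hom: "alpha A \<in> hom C (phiO g (fold_obj C phiO ts A)) (fold_obj C phiO ts A)"
    and alpha_iso: "iso_arr C (alpha A)"
  unfolding alpha_def
  using comp_in_hom[OF reordering_in_hom[OF A] rho_in_hom[OF A]]
    iso_comp[OF reordering_in_hom[OF A] _ rho_in_hom[OF A] rho_iso[OF A]]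
    struct_arrs_iso[OF reordering_struct[OF A]] by simp_all

lemma alpha_natural:
  assumes f: "f \<in> hat_hom C H phiO phiM eta A B"
  shows "cp C (alpha B) (phiM g (fold_arr C phiM ts f)) = cp C (fold_arr C phiM ts f) (alpha A)"
proof -
  have fAB: "f \<in> hom C A B"
    using f unfolding hat_hom_def by simp
  have obs: "A \<in> ob C" "B \<in> ob C"
    using hom_ob[OF fAB] by auto
  have factors: "\<forall>k\<in>set (map \<psi> ts). phiM (k \<otimes> h k) f \<in> hom C (twisted A k) (twisted B k)"
    "\<forall>k\<in>set ts. phiM (k \<otimes> h k) f \<in> hom C (twisted A k) (twisted B k)"
    using twisted_arr_in_hom[OF fAB] \<psi>_in_transversal by simp_all
  show ?thesis
    unfolding alpha_def action_fold_arr[OF fAB]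
    by (rule paste_squares[OF _ _ _ _ _ _ _ natural_reordering_natural[OF S factors(1)] rho_natural[OF f]])
      (use tens_ars_in_hom[OF factors(1)] tens_ars_in_hom[OF factors(2)] fold_arr_in_hom[OF fAB]
        reordering_in_hom[OF obs(1)] reordering_in_hom[OF obs(2)] rho_in_hom[OF obs(1)]
        rho_in_hom[OF obs(2)] action_fold_obj[OF obs(1)] action_fold_obj[OF obs(2)] in simp_all)
qed

lemma alpha_conj:
  assumes f: "f \<in> hat_hom C H phiO phiM eta A B"
  shows "cp C (alpha B) (cp C (phiM g (fold_arr C phiM ts f)) (inv_arr C (alpha A))) = fold_arr C phiM ts f"
proof -
  have fAB: "f \<in> hom C A B"
    using f unfolding hat_hom_def by simp
  have obs: "A \<in> ob C" "B \<in> ob C"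
    using hom_ob[OF fAB] by auto
  show ?thesis
    using conj_by_iso[OF alpha_in_hom[OF obs(1)] alpha_iso[OF obs(1)] alpha_in_hom[OF obs(2)]
        functor_in_hom[OF action_functor[OF g] fold_arr_in_hom[OF fAB]] fold_arr_in_hom[OF fAB]
        alpha_natural[OF f]] .
qed

end

theorem mainTheorem3:
  fixes C :: "('o, 'm) smcat" and G :: "('g, 'b) monoid_scheme" and H :: "'g set"
    and phiO :: "'g \<Rightarrow> 'o \<Rightarrow> 'o" and phiM :: "'g \<Rightarrow> 'm \<Rightarrow> 'm"
    and eta :: "'g \<Rightarrow> 'o \<Rightarrow> 'm" and ts :: "'g list"
  assumes "sym_monoidal_cat C"
    and "group G" and "finite (carrier G)"
    and "strict_action C G phiO phiM"
    and "subgroup H G"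
    and "eta_data C G H phiO phiM eta"
    and "left_transversal G H ts"
  shows "\<forall>g \<in> carrier G. \<exists>(h :: 'g \<Rightarrow> 'g) (\<alpha> :: 'o \<Rightarrow> 'm).
     (\<forall>t \<in> set ts. h t \<in> H \<and> t \<otimes>\<^bsub>G\<^esub> h t \<in> (\<lambda>s. g \<otimes>\<^bsub>G\<^esub> s) ` set ts)
   \<and> (\<forall>A \<in> ob C. \<exists>\<sigma>.
        \<sigma> \<in> struct_arrs C
      \<and> \<sigma> \<in> hom C (phiO g (fold_obj C phiO ts A))
                   (tens_obs C (map (\<lambda>t. phiO (t \<otimes>\<^bsub>G\<^esub> h t) A) ts))
      \<and> \<alpha> A = cp C (tens_ars C (map (\<lambda>t. phiM t (inv_arr C (eta (h t) A))) ts)) \<sigma>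
      \<and> \<alpha> A \<in> hom C (phiO g (fold_obj C phiO ts A)) (fold_obj C phiO ts A)
      \<and> iso_arr C (\<alpha> A))
   \<and> (\<forall>A \<in> ob C. \<forall>B \<in> ob C. \<forall>f \<in> hat_hom C H phiO phiM eta A B.
        cp C (\<alpha> B) (cp C (phiM g (fold_arr C phiM ts f)) (inv_arr C (\<alpha> A)))
        = fold_arr C phiM ts f)"
proof (intro ballI, goal_cases)
  case (1 g)
  interpret folding_data C G H phiO phiM eta ts
    using assms by (simp add: folding_data_def folding_data_axioms_def sym_monoidal_def)
  obtain \<psi> h where \<psi>: "bij_betw \<psi> (set ts) (set ts)" and h: "\<forall>t\<in>set ts. h t \<in> H"
    and \<psi>_h: "\<forall>t\<in>set ts. \<psi> t \<otimes>\<^bsub>G\<^esub> h (\<psi> t) = g \<otimes>\<^bsub>G\<^esub> t"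
    using transversal_translation[OF subgroup transversal 1] .
  obtain S where "natural_reordering (map \<psi> ts) ts S"
    using natural_reordering_exists \<psi> transversal_distinct
    by (metis bij_betw_imp_inj_on bij_betw_imp_surj_on distinct_map set_map)
  then interpret folding_twist C G H phiO phiM eta ts g \<psi> h S
    using 1 \<psi> h \<psi>_h by unfold_locales auto
  show ?case
    by (rule exI[of _ h], rule exI[of _ alpha])
      (use twisted_in_translate h_in_subgroup reordering_struct reordering_in_hom alpha_in_hom alpha_iso
        alpha_conj in \<open>simp add: alpha_def rho_def twisted_def[abs_def]; blast\<close>)
qed

end
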